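(* Let $k\ge1$, $1\le l\le k$, and suppose $\delta\notin\bigcup_{j=1}^kI_j$, where $I_j=\{-\frac{p}{2(n+1)}:p\in\{j-1,\dots,2j-2\}\}$. Then the restriction of $s^l=s_{k-1}\circ\cdots\circ s_{k-l}$ to $R^{k-l}\cap\ker i(\alpha)$ equals $c(l,k-l)\,X^l$, where \[c(l,k-l)=\Big(\prod_{i=1}^lr(i,k-l)\Big)^{-1}.\]
   Context: Let $n\ge1$, $M=\mathbb{R}^{2n+1}$ with coordinates $(q^1,\dots,q^n,p^1,\dots,p^n,t)$. For $\mu\in\mathbb{R}$, $\mathcal{S}^k_\mu$ denotes the space of smooth functions $S(x,\xi)$ on $M\times\mathbb{R}^{2n+1}$ homogeneous polynomial of degree $k$ in $\xi=(\xi_{q^1},\dots,\xi_{q^n},\xi_{p^1},\dots,\xi_{p^n},\xi_t)$. Fix $\delta\in\mathbb{R}$ and set $R^k=\mathcal{S}^k_{\delta+\frac{k}{n+1}}$ for $k\ge0$, $R^{j}=0$ for $j<0$. Let $E_s=\sum_i(p^i\partial_{p^i}+q^i\partial_{q^i})$, $\langle E_s,\xi\rangle=\sum_i(p^i\xi_{p^i}+q^i\xi_{q^i})$, $D(S)=\sum_i(\xi_{q^i}\partial_{p^i}S-\xi_{p^i}\partial_{q^i}S)+\xi_tE_s(S)-\langle E_s,\xi\rangle\partial_tS$. Operators: $i(\alpha):R^k\to R^{k-1}$, $i(\alpha)(S)=\frac12\big(\sum_i(p^i\partial_{\xi_{q^i}}S-q^i\partial_{\xi_{p^i}}S)-\partial_{\xi_t}S\big)$;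 $X:R^k\to R^{k+1}$, $X(S)=D(S)+(2(n+1)\delta+k)\xi_tS$. Set $r(l,k)=-\frac{l}{2}\big(2(n+1)\delta+2k+l-1\big)$. For $j\ge1$ with $\delta\notin I_j$, $s_{j-1}:R^{j-1}\to R^j$ is $s_{j-1}(S)=-\sum_{l=1}^jb_{j,l}X^l(i(\alpha)^{l-1}(S))$ with $b_{j,l}=\big(\prod_{m=1}^l(-r(m,j-m))\big)^{-1}$. *)

theory Defs
  imports "HOL-Analysis.Analysis"
begin

definition pdir :: "('a::real_normed_vector \<Rightarrow> real) \<Rightarrow> 'a \<Rightarrow> 'a \<Rightarrow> real" where
  "pdir f v = (\<lambda>z. deriv (\<lambda>h. f (z + h *\<^sub>R v)) 0)"

definition smooth :: "('a::euclidean_space \<Rightarrow> real) \<Rightarrow> bool" where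
  "smooth f \<longleftrightarrow> (\<forall>vs. set vs \<subseteq> Basis \<longrightarrow>
      (\<forall>z. (foldr (\<lambda>v g. pdir g v) vs f) differentiable (at z)))"

definition multi_idx :: "nat \<Rightarrow> ('a::euclidean_space \<Rightarrow> nat) set" where
  "multi_idx k = {\<alpha>. (\<forall>b. b \<notin> Basis \<longrightarrow> \<alpha> b = 0) \<and> (\<Sum>b\<in>Basis. \<alpha> b) = k}"

definition monom_xi :: "('a::euclidean_space \<Rightarrow> nat) \<Rightarrow> 'a \<Rightarrow> real" where
  "monom_xi \<alpha> \<xi> = (\<Prod>b\<in>Basis. (\<xi> \<bullet> b) ^ \<alpha> b)"

section \<open>The setting: M = R^(2n+1), coordinates (q,p,t), n = CARD('n)\<close>

type_synonym 'n pt = "(real^'n) \<times> (real^'n) \<times> real"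
type_synonym 'n symb = "'n pt \<times> 'n pt \<Rightarrow> real"

definition qc :: "'n::finite pt \<Rightarrow> 'n \<Rightarrow> real" where "qc x i = fst x $ i"
definition pc :: "'n::finite pt \<Rightarrow> 'n \<Rightarrow> real" where "pc x i = fst (snd x) $ i"
definition tc :: "'n::finite pt \<Rightarrow> real" where "tc x = snd (snd x)"

definition eq :: "'n::finite \<Rightarrow> 'n pt" where "eq i = (axis i 1, 0, 0)"
definition ep :: "'n::finite \<Rightarrow> 'n pt" where "ep i = (0, axis i 1, 0)"
definition et :: "'n::finite pt" where "et = (0, 0, 1)"

definition dx :: "'n::finite symb \<Rightarrow> 'n pt \<Rightarrow> 'n symb" where
  "dx S v = pdir S (v, 0)"
definition dxi :: "'n::finite symb \<Rightarrow> 'n pt \<Rightarrow> 'n symb" where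
  "dxi S v = pdir S (0, v)"

text \<open>The space S^k_mu (as a space of functions it does not depend on the weight mu):
  smooth functions on M x R^(2n+1), homogeneous polynomial of degree k in xi
  with smooth coefficients.\<close>
definition Sk :: "nat \<Rightarrow> 'n::finite symb set" where
  "Sk k = {S. smooth S \<and>
     (\<exists>a. (\<forall>\<alpha>\<in>multi_idx k. smooth (a \<alpha>)) \<and>
          (\<forall>x \<xi>. S (x, \<xi>) = (\<Sum>\<alpha>\<in>multi_idx k. a \<alpha> x * monom_xi \<alpha> \<xi>)))}"

text \<open>R^k = S^k_{delta + k/(n+1)}, k \<ge> 0.\<close>
definition Rsp :: "real \<Rightarrow> nat \<Rightarrow> 'n::finite symb set" where
  "Rsp \<delta> k = Sk k"

definition Es :: "'n::finite symb \<Rightarrow> 'n symb" where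
  "Es S = (\<lambda>(x, \<xi>). \<Sum>i\<in>UNIV. pc x i * dx S (ep i) (x, \<xi>) + qc x i * dx S (eq i) (x, \<xi>))"

definition Es_xi :: "'n::finite pt \<Rightarrow> 'n pt \<Rightarrow> real" where
  "Es_xi x \<xi> = (\<Sum>i\<in>UNIV. pc x i * pc \<xi> i + qc x i * qc \<xi> i)"

definition Dop :: "'n::finite symb \<Rightarrow> 'n symb" where
  "Dop S = (\<lambda>(x, \<xi>).
     (\<Sum>i\<in>UNIV. qc \<xi> i * dx S (ep i) (x, \<xi>) - pc \<xi> i * dx S (eq i) (x, \<xi>))
     + tc \<xi> * Es S (x, \<xi>) - Es_xi x \<xi> * dx S et (x, \<xi>))"

definition ialpha :: "'n::finite symb \<Rightarrow> 'n symb" where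
  "ialpha S = (\<lambda>(x, \<xi>). 1/2 * ((\<Sum>i\<in>UNIV. pc x i * dxi S (eq i) (x, \<xi>)
                                     - qc x i * dxi S (ep i) (x, \<xi>))
                                 - dxi S et (x, \<xi>)))"

text \<open>X : R^k \<rightarrow> R^(k+1), depends on the degree k of its argument.\<close>
definition Xop :: "real \<Rightarrow> nat \<Rightarrow> 'n::finite symb \<Rightarrow> 'n symb" where
  "Xop \<delta> k S = (\<lambda>(x, \<xi>). Dop S (x, \<xi>)
      + (2 * (real CARD('n) + 1) * \<delta> + real k) * tc \<xi> * S (x, \<xi>))"

text \<open>X^l applied to an element of R^m: X_(m+l-1) o ... o X_m.\<close>
primrec Xpow :: "real \<Rightarrow> nat \<Rightarrow> nat \<Rightarrow> 'n::finite symb \<Rightarrow> 'n symb" where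
  "Xpow \<delta> m 0 S = S"
| "Xpow \<delta> m (Suc l) S = Xop \<delta> (m + l) (Xpow \<delta> m l S)"

definition rr :: "nat \<Rightarrow> real \<Rightarrow> nat \<Rightarrow> nat \<Rightarrow> real" where
  "rr n \<delta> l k = - (real l / 2) * (2 * (real n + 1) * \<delta> + 2 * real k + real l - 1)"

definition bb :: "nat \<Rightarrow> real \<Rightarrow> nat \<Rightarrow> nat \<Rightarrow> real" where
  "bb n \<delta> j l = inverse (\<Prod>m=1..l. - rr n \<delta> m (j - m))"

definition Iset :: "nat \<Rightarrow> nat \<Rightarrow> real set" where
  "Iset n j = {- real p / (2 * (real n + 1)) | p. p \<in> {j - 1 .. 2 * j - 2}}"

text \<open>s_d : R^d \<rightarrow> R^(d+1) (this is s_(j-1) with j = d+1).\<close>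
definition sop :: "real \<Rightarrow> nat \<Rightarrow> 'n::finite symb \<Rightarrow> 'n symb" where
  "sop \<delta> d S = (\<lambda>z. - (\<Sum>l=1..d+1. bb CARD('n) \<delta> (d+1) l
                        * Xpow \<delta> (d + 1 - l) l ((ialpha ^^ (l - 1)) S) z))"

text \<open>s^l on R^m: s_(m+l-1) o ... o s_m.\<close>
primrec spow :: "real \<Rightarrow> nat \<Rightarrow> nat \<Rightarrow> 'n::finite symb \<Rightarrow> 'n symb" where
  "spow \<delta> m 0 S = S"
| "spow \<delta> m (Suc l) S = sop \<delta> (m + l) (spow \<delta> m l S)"

end

theory Submission
  imports Defs
begin

text \<open>Write \<open>N = CARD('n)\<close> and \<open>C\<^sub>k = 2(N+1)\<delta> + k\<close>, so that \<open>X = D + C\<^sub>k \<xi>\<^sub>t\<close> on \<open>R\<^sup>k\<close>.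
  A direct computation with Euler's identity for symbols homogeneous of degree \<open>k\<close> in \<open>\<xi>\<close>
  gives the commutation relation
  \<open>i(\<alpha>) X T = D (i(\<alpha>) T) + (C\<^sub>k - 1) \<xi>\<^sub>t i(\<alpha>) T - ((N+1)\<delta> + k) T\<close>.
  By induction it follows that \<open>i(\<alpha>) X\<^sup>b S = r(b,m) X\<^sup>b\<^sup>-\<^sup>1 S\<close> for \<open>S \<in> R\<^sup>m \<inter> ker i(\<alpha>)\<close>.
  Hence every summand of \<open>s\<^sub>m\<^sub>+\<^sub>b(X\<^sup>b S)\<close> is a multiple of \<open>X\<^sup>b\<^sup>+\<^sup>1 S\<close>, and the coefficients
  telescope to \<open>1 / r(b+1,m)\<close>; the hypothesis on \<open>\<delta>\<close> says exactly that no \<open>r(l, j-l)\<close> vanishes.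
  Induction on \<open>l\<close> then gives \<open>s\<^sup>l S = c(l,m) X\<^sup>l S\<close>.

  Smoothness enters only to justify the calculus: all operators preserve the class of
  finite sums of products \<open>a(x) g(\<xi>)\<close> of \<open>C\<^sup>\<infinity>\<close> functions, on which mixed partials in \<open>x\<close>
  and \<open>\<xi>\<close> commute.\<close>

lemma has_derivative_along_line:
  assumes "(f has_derivative f') (at z)"
  shows "((\<lambda>h. f (z + h *\<^sub>R v)) has_real_derivative f' v) (at 0)"
proof -
  have line: "((\<lambda>h::real. z + h *\<^sub>R v) has_derivative (\<lambda>h. h *\<^sub>R v)) (at 0)"
    by (auto intro!: derivative_eq_intros)
  have "((\<lambda>h. f (z + h *\<^sub>R v)) has_derivative (\<lambda>h. f' (h *\<^sub>R v))) (at 0)"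
    using has_derivative_compose[OF line, of f f'] assms by simp
  moreover have "(\<lambda>h. f' (h *\<^sub>R v)) = (*) (f' v)"
    using has_derivative_linear[OF assms] by (auto simp: linear_scale)
  ultimately show ?thesis by (simp add: has_field_derivative_def)
qed

lemma pdir_eq_has_derivative: "(f has_derivative f') (at z) \<Longrightarrow> pdir f v z = f' v"
  unfolding pdir_def by (rule DERIV_imp_deriv[OF has_derivative_along_line])

lemma pdir_frechet_derivative:
  "f differentiable (at z) \<Longrightarrow> pdir f v z = frechet_derivative f (at z) v"
  by (rule pdir_eq_has_derivative) (simp add: frechet_derivative_works[symmetric])

lemma pdir_const [simp]: "pdir (\<lambda>z. c) v = (\<lambda>z. 0)"
  by (rule ext, rule pdir_eq_has_derivative) (auto intro: derivative_eq_intros)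

lemma pdir_bounded_linear: "bounded_linear L \<Longrightarrow> pdir L v z = L v"
  by (rule pdir_eq_has_derivative[OF bounded_linear_imp_has_derivative])

lemma
  assumes f: "f differentiable (at z)" and g: "g differentiable (at z)"
  shows pdir_add: "pdir (\<lambda>z. f z + g z) v z = pdir f v z + pdir g v z"
    and pdir_diff: "pdir (\<lambda>z. f z - g z) v z = pdir f v z - pdir g v z"
    and pdir_mult: "pdir (\<lambda>z. f z * g z) v z = f z * pdir g v z + pdir f v z * g z"
proof -
  note Df = f[unfolded frechet_derivative_works] and Dg = g[unfolded frechet_derivative_works]
  show "pdir (\<lambda>z. f z + g z) v z = pdir f v z + pdir g v z"
    using pdir_eq_has_derivative[OF has_derivative_add[OF Df Dg]] f g
    by (simp add: pdir_frechet_derivative)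
  show "pdir (\<lambda>z. f z - g z) v z = pdir f v z - pdir g v z"
    using pdir_eq_has_derivative[OF has_derivative_diff[OF Df Dg]] f g
    by (simp add: pdir_frechet_derivative)
  show "pdir (\<lambda>z. f z * g z) v z = f z * pdir g v z + pdir f v z * g z"
    using pdir_eq_has_derivative[OF has_derivative_mult[OF Df Dg]] f g
    by (simp add: pdir_frechet_derivative)
qed

lemma pdir_scale: "f differentiable (at z) \<Longrightarrow> pdir (\<lambda>z. c * f z) v z = c * pdir f v z"
  using pdir_mult[of "\<lambda>_. c" z f] by simp

lemma pdir_sum:
  assumes "\<And>i. i \<in> I \<Longrightarrow> f i differentiable (at z)"
  shows "pdir (\<lambda>z. \<Sum>i\<in>I. f i z) v z = (\<Sum>i\<in>I. pdir (f i) v z)"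
  using pdir_eq_has_derivative[OF has_derivative_sum[OF assms[unfolded frechet_derivative_works]]]
    assms by (simp add: pdir_frechet_derivative)

coinductive C_inf :: "('a::euclidean_space \<Rightarrow> real) \<Rightarrow> bool" where
  "(\<forall>z. f differentiable (at z)) \<Longrightarrow> (\<forall>b\<in>Basis. C_inf (pdir f b)) \<Longrightarrow> C_inf f"

lemma C_inf_differentiable: "C_inf f \<Longrightarrow> f differentiable (at z)"
  by (erule C_inf.cases) auto

lemma C_inf_pdir: "C_inf f \<Longrightarrow> b \<in> Basis \<Longrightarrow> C_inf (pdir f b)"
  by (erule C_inf.cases) auto

lemma C_inf_const: "C_inf (\<lambda>z. c)"
proof -
  have "\<exists>c. f = (\<lambda>z. c) \<Longrightarrow> C_inf f" for f :: "'a \<Rightarrow> real"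
    by (coinduction arbitrary: f) auto
  then show ?thesis by blast
qed

lemma has_derivative_sum_products:
  fixes L :: "(('a::real_normed_vector \<Rightarrow> real) \<times> ('a \<Rightarrow> real)) list"
  assumes "\<forall>(f, g)\<in>set L. f differentiable (at z) \<and> g differentiable (at z)"
  shows "((\<lambda>z. \<Sum>(f, g)\<leftarrow>L. f z * g z) has_derivative
          (\<lambda>h. \<Sum>(f, g)\<leftarrow>L. f z * frechet_derivative g (at z) h + frechet_derivative f (at z) h * g z))
         (at z)"
  using assms
proof (induction L)
  case (Cons fg L)
  obtain f g where fg: "fg = (f, g)" by force
  then have Df: "(f has_derivative frechet_derivative f (at z)) (at z)"
    and Dg: "(g has_derivative frechet_derivative g (at z)) (at z)"
    using Cons.prems by (auto simp: frechet_derivative_works[symmetric])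
  have "((\<lambda>z. f z * g z + (\<Sum>(f, g)\<leftarrow>L. f z * g z)) has_derivative
       (\<lambda>h. (f z * frechet_derivative g (at z) h + frechet_derivative f (at z) h * g z)
          + (\<Sum>(f, g)\<leftarrow>L. f z * frechet_derivative g (at z) h + frechet_derivative f (at z) h * g z)))
       (at z)"
    by (rule has_derivative_add[OF has_derivative_mult[OF Df Dg] Cons.IH]) (use Cons.prems in auto)
  then show ?case using fg by simp
qed (simp add: has_derivative_const)

text \<open>Closure under products needs the coinduction to range over finite sums of products,
  since the derivative of a product is such a sum.\<close>

lemma C_inf_sum_products:
  assumes "\<forall>(f, g)\<in>set L. C_inf f \<and> C_inf g" and "h = (\<lambda>z. \<Sum>(f, g)\<leftarrow>L. f z * g z)"
  shows "C_inf h"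
  using assms
proof (coinduction arbitrary: h L)
  case C_inf
  have diff: "\<forall>(f, g)\<in>set L. f differentiable (at z) \<and> g differentiable (at z)" for z
    using C_inf(1) by (auto intro: C_inf_differentiable)
  have "h differentiable (at z)" for z
    using has_derivative_sum_products[OF diff[of z]] C_inf(2) unfolding differentiable_def by blast
  moreover have "\<exists>h' L'. pdir h b = h' \<and> (\<forall>(f, g)\<in>set L'. C_inf f \<and> C_inf g)
                       \<and> h' = (\<lambda>z. \<Sum>(f, g)\<leftarrow>L'. f z * g z)"
    if b: "b \<in> Basis" for b
  proof (intro exI conjI)
    let ?L' = "concat (map (\<lambda>(f, g). [(f, pdir g b), (pdir f b, g)]) L)"
    show "\<forall>(f, g)\<in>set ?L'. C_inf f \<and> C_inf g"
      using C_inf(1) b by (auto intro: C_inf_pdir)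
    have "pdir h b z = (\<Sum>(f, g)\<leftarrow>?L'. f z * g z)" for z
    proof -
      have "pdir h b z = (\<Sum>(f, g)\<leftarrow>L. f z * frechet_derivative g (at z) b
                                         + frechet_derivative f (at z) b * g z)"
        using has_derivative_sum_products[OF diff[of z]] C_inf(2) by (simp add: pdir_eq_has_derivative)
      also have "\<dots> = (\<Sum>(f, g)\<leftarrow>L. f z * pdir g b z + pdir f b z * g z)"
        using diff[of z] by (intro arg_cong[where f=sum_list] map_cong) (auto simp: pdir_frechet_derivative)
      also have "\<dots> = (\<Sum>(f, g)\<leftarrow>?L'. f z * g z)"
        by (induction L) auto
      finally show ?thesis .
    qed
    then show "pdir h b = (\<lambda>z. \<Sum>(f, g)\<leftarrow>?L'. f z * g z)" by auto
  qed rule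
  ultimately show ?case by blast
qed

lemma C_inf_mult: "C_inf f \<Longrightarrow> C_inf g \<Longrightarrow> C_inf (\<lambda>z. f z * g z)"
  by (rule C_inf_sum_products[of "[(f, g)]"]) auto

lemma C_inf_bounded_linear: "bounded_linear f \<Longrightarrow> C_inf f"
proof (rule C_inf.intros)
  assume "bounded_linear f"
  then have D: "(f has_derivative f) (at z)" for z by (rule bounded_linear_imp_has_derivative)
  then show "\<forall>z. f differentiable (at z)" unfolding differentiable_def by blast
  have "pdir f b = (\<lambda>z. f b)" for b using D by (auto simp: pdir_eq_has_derivative)
  then show "\<forall>b\<in>Basis. C_inf (pdir f b)" by (auto simp: C_inf_const)
qed

lemma C_inf_prod: "(\<And>i. i \<in> A \<Longrightarrow> C_inf (f i)) \<Longrightarrow> C_inf (\<lambda>z. \<Prod>i\<in>A. f i z)"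
  by (induction A rule: infinite_finite_induct) (auto simp: C_inf_const intro: C_inf_mult)

lemma C_inf_power: "C_inf f \<Longrightarrow> C_inf (\<lambda>z. f z ^ n)"
  by (induction n) (auto simp: C_inf_const intro: C_inf_mult)

lemma smooth_imp_C_inf: "smooth (f::'a::euclidean_space \<Rightarrow> real) \<Longrightarrow> C_inf f"
proof (coinduction arbitrary: f)
  case C_inf
  have "f differentiable (at z)" for z
    using C_inf unfolding smooth_def by (metis empty_subsetI foldr_Nil id_apply list.set(1))
  moreover have "smooth (pdir f b)" if "b \<in> Basis" for b
    unfolding smooth_def
  proof (intro allI impI)
    fix vs :: "'a list" and z :: 'a
    assume "set vs \<subseteq> Basis"
    then have "set (vs @ [b]) \<subseteq> Basis" using that by auto
    then have "(foldr (\<lambda>v g. pdir g v) (vs @ [b]) f) differentiable (at z)"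
      using C_inf unfolding smooth_def by blast
    then show "(foldr (\<lambda>v g. pdir g v) vs (pdir f b)) differentiable (at z)" by simp
  qed
  ultimately show ?case by blast
qed

lemma C_inf_monom_xi: "C_inf (monom_xi \<alpha>)"
  unfolding monom_xi_def[abs_def]
  by (intro C_inf_prod C_inf_power C_inf_bounded_linear bounded_linear_inner_left)

subsection \<open>Separable symbols\<close>

lemma Basis_coordinates [simp]:
  "eq i \<in> (Basis :: 'n::finite pt set)" "ep i \<in> (Basis :: 'n pt set)" "et \<in> (Basis :: 'n pt set)"
  by (auto simp: eq_def ep_def et_def Basis_prod_def Basis_vec_def image_iff zero_prod_def)

lemma bounded_linear_coordinates:
  "bounded_linear (\<lambda>x::'n::finite pt. qc x i)"
  "bounded_linear (\<lambda>x::'n pt. pc x i)"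
  "bounded_linear (\<lambda>x::'n pt. tc x)"
  unfolding qc_def pc_def tc_def
  by (intro bounded_linear_compose[OF bounded_linear_vec_nth] bounded_linear_compose[OF bounded_linear_snd]
      bounded_linear_compose[OF bounded_linear_fst] bounded_linear_fst bounded_linear_snd)+

lemma bounded_linear_symbol_coordinates:
  "bounded_linear (\<lambda>z::'n::finite pt \<times> 'n pt. qc (fst z) i)"
  "bounded_linear (\<lambda>z::'n pt \<times> 'n pt. pc (fst z) i)"
  "bounded_linear (\<lambda>z::'n pt \<times> 'n pt. qc (snd z) i)"
  "bounded_linear (\<lambda>z::'n pt \<times> 'n pt. pc (snd z) i)"
  "bounded_linear (\<lambda>z::'n pt \<times> 'n pt. tc (snd z))"
  by (intro bounded_linear_compose[OF bounded_linear_coordinates(1)]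
      bounded_linear_compose[OF bounded_linear_coordinates(2)]
      bounded_linear_compose[OF bounded_linear_coordinates(3)] bounded_linear_fst bounded_linear_snd)+

lemma pdir_symbol_coordinates [simp]:
  "pdir (\<lambda>z::'n::finite pt \<times> 'n pt. qc (fst z) i) v z = qc (fst v) i"
  "pdir (\<lambda>z::'n pt \<times> 'n pt. pc (fst z) i) v z = pc (fst v) i"
  "pdir (\<lambda>z::'n pt \<times> 'n pt. qc (snd z) i) v z = qc (snd v) i"
  "pdir (\<lambda>z::'n pt \<times> 'n pt. pc (snd z) i) v z = pc (snd v) i"
  "pdir (\<lambda>z::'n pt \<times> 'n pt. tc (snd z)) v z = tc (snd v)"
  by (simp_all add: pdir_bounded_linear bounded_linear_symbol_coordinates)

lemma differentiable_symbol_coordinates [simp]: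
  "(\<lambda>z::'n::finite pt \<times> 'n pt. qc (fst z) i) differentiable F"
  "(\<lambda>z::'n pt \<times> 'n pt. pc (fst z) i) differentiable F"
  "(\<lambda>z::'n pt \<times> 'n pt. qc (snd z) i) differentiable F"
  "(\<lambda>z::'n pt \<times> 'n pt. pc (snd z) i) differentiable F"
  "(\<lambda>z::'n pt \<times> 'n pt. tc (snd z)) differentiable F"
  by (simp_all add: bounded_linear_imp_differentiable bounded_linear_symbol_coordinates)

lemma coordinates_zero [simp]: "qc 0 i = 0" "pc 0 i = 0" "tc 0 = 0"
  by (simp_all add: qc_def pc_def tc_def)

lemma coordinates_basis [simp]:
  "qc (eq j) i = (if j = i then 1 else 0)" "pc (eq j) i = 0" "tc (eq j) = 0"
  "qc (ep j) i = 0" "pc (ep j) i = (if j = i then 1 else 0)" "tc (ep j) = 0"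
  "qc et i = 0" "pc et i = 0" "tc et = 1"
  by (simp_all add: qc_def pc_def tc_def eq_def ep_def et_def axis_def)

lemma coordinates_scaleR [simp]:
  "qc (c *\<^sub>R \<xi>) i = c * qc \<xi> i" "pc (c *\<^sub>R \<xi>) i = c * pc \<xi> i" "tc (c *\<^sub>R \<xi>) = c * tc \<xi>"
  by (simp_all add: qc_def pc_def tc_def)

lemma C_inf_coordinates: "C_inf (\<lambda>x::'n::finite pt. qc x i)" "C_inf (\<lambda>x::'n pt. pc x i)" "C_inf tc"
  using bounded_linear_coordinates[THEN C_inf_bounded_linear] by simp_all

inductive separable :: "'n::finite symb \<Rightarrow> bool" where
  separable_product: "C_inf a \<Longrightarrow> C_inf g \<Longrightarrow> separable (\<lambda>z. a (fst z) * g (snd z))"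
| separable_add: "separable f \<Longrightarrow> separable g \<Longrightarrow> separable (\<lambda>z. f z + g z)"

lemma has_derivative_product:
  fixes a :: "'a::real_normed_vector \<Rightarrow> real" and g :: "'b::real_normed_vector \<Rightarrow> real"
  assumes "a differentiable (at (fst z))" "g differentiable (at (snd z))"
  shows "((\<lambda>z. a (fst z) * g (snd z)) has_derivative
     (\<lambda>h. a (fst z) * frechet_derivative g (at (snd z)) (snd h)
        + frechet_derivative a (at (fst z)) (fst h) * g (snd z))) (at z)"
proof -
  have "((\<lambda>z. a (fst z)) has_derivative (\<lambda>h. frechet_derivative a (at (fst z)) (fst h))) (at z)"
    using has_derivative_compose[OF has_derivative_fst[OF has_derivative_ident]]
      assms(1)[unfolded frechet_derivative_works] by blast
  moreover have "((\<lambda>z. g (snd z)) has_derivative (\<lambda>h. frechet_derivative g (at (snd z)) (snd h))) (at z)"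
    using has_derivative_compose[OF has_derivative_snd[OF has_derivative_ident]]
      assms(2)[unfolded frechet_derivative_works] by blast
  ultimately show ?thesis by (rule has_derivative_mult)
qed

lemma separable_differentiable [simp]: "separable f \<Longrightarrow> f differentiable (at z)"
proof (induction rule: separable.induct)
  case (separable_product a g)
  then show ?case
    using has_derivative_product[of a z g] C_inf_differentiable unfolding differentiable_def by blast
qed auto

lemma
  assumes "C_inf a" "C_inf g"
  shows dx_product: "dx (\<lambda>z. a (fst z) * g (snd z)) e = (\<lambda>z. pdir a e (fst z) * g (snd z))"
    and dxi_product: "dxi (\<lambda>z. a (fst z) * g (snd z)) e = (\<lambda>z. a (fst z) * pdir g e (snd z))"
  unfolding dx_def dxi_def
  using assms
  by (auto intro!: ext simp: pdir_eq_has_derivative[OF has_derivative_product] pdir_frechet_derivative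
      C_inf_differentiable linear_0 linear_frechet_derivative)

lemma
  assumes "separable f" "separable g"
  shows dx_add: "dx (\<lambda>z. f z + g z) e = (\<lambda>z. dx f e z + dx g e z)"
    and dxi_add: "dxi (\<lambda>z. f z + g z) e = (\<lambda>z. dxi f e z + dxi g e z)"
  unfolding dx_def dxi_def using assms by (auto simp: pdir_add)

lemma separable_dx [simp]: "separable f \<Longrightarrow> e \<in> Basis \<Longrightarrow> separable (dx f e)"
  by (induction rule: separable.induct)
    (simp_all add: dx_product dx_add separable.intros C_inf_pdir)

lemma separable_dxi [simp]: "separable f \<Longrightarrow> e \<in> Basis \<Longrightarrow> separable (dxi f e)"
  by (induction rule: separable.induct)
    (simp_all add: dxi_product dxi_add separable.intros C_inf_pdir)

lemma dx_dxi_commute: "separable f \<Longrightarrow> e \<in> Basis \<Longrightarrow> w \<in> Basis \<Longrightarrow> dx (dxi f w) e = dxi (dx f e) w"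
  by (induction rule: separable.induct)
    (simp_all add: dx_product dxi_product dx_add dxi_add C_inf_pdir)

lemma separable_zero: "separable (\<lambda>z. 0)"
  using separable_product[OF C_inf_const C_inf_const, of 0 0] by simp

lemma separable_mult_base:
  assumes u: "C_inf u" and "separable f"
  shows "separable (\<lambda>z. u (fst z) * f z)"
  using assms(2)
proof (induction rule: separable.induct)
  case (separable_product a g)
  then have "separable (\<lambda>z. (\<lambda>x. u x * a x) (fst z) * g (snd z))"
    using u by (intro separable.separable_product C_inf_mult)
  then show ?case by (simp add: mult.assoc)
next
  case (separable_add f g)
  then have "separable (\<lambda>z. u (fst z) * f z + u (fst z) * g z)" by (intro separable.separable_add)
  then show ?case by (simp add: distrib_left)
qed

lemma separable_mult_fibre:
  assumes u: "C_inf u" and "separable f"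
  shows "separable (\<lambda>z. u (snd z) * f z)"
  using assms(2)
proof (induction rule: separable.induct)
  case (separable_product a g)
  then have "separable (\<lambda>z. a (fst z) * (\<lambda>x. u x * g x) (snd z))"
    using u by (intro separable.separable_product C_inf_mult)
  then show ?case by (simp add: ac_simps)
next
  case (separable_add f g)
  then have "separable (\<lambda>z. u (snd z) * f z + u (snd z) * g z)" by (intro separable.separable_add)
  then show ?case by (simp add: distrib_left)
qed

lemma separable_scale: "separable f \<Longrightarrow> separable (\<lambda>z. c * f z)"
  using separable_mult_base[OF C_inf_const, of f c] by simp

lemma separable_diff [simp]: "separable f \<Longrightarrow> separable g \<Longrightarrow> separable (\<lambda>z. f z - g z)"
  using separable_add[of f "\<lambda>z. (-1) * g z"] separable_scale[of g "-1"] by simp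

lemma separable_sum [simp]: "(\<And>i. i \<in> A \<Longrightarrow> separable (f i)) \<Longrightarrow> separable (\<lambda>z. \<Sum>i\<in>A. f i z)"
  by (induction A rule: infinite_finite_induct) (auto simp: separable_zero intro: separable_add)

lemma separable_mult_coordinates [simp]:
  "separable f \<Longrightarrow> separable (\<lambda>z. qc (fst z) i * f z)"
  "separable f \<Longrightarrow> separable (\<lambda>z. pc (fst z) i * f z)"
  "separable f \<Longrightarrow> separable (\<lambda>z. qc (snd z) i * f z)"
  "separable f \<Longrightarrow> separable (\<lambda>z. pc (snd z) i * f z)"
  "separable f \<Longrightarrow> separable (\<lambda>z. tc (snd z) * f z)"
  using separable_mult_base[OF C_inf_coordinates(1)] separable_mult_base[OF C_inf_coordinates(2)]
    separable_mult_fibre[OF C_inf_coordinates(1)] separable_mult_fibre[OF C_inf_coordinates(2)]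
    separable_mult_fibre[OF C_inf_coordinates(3)] by blast+

definition ialpha_pq :: "('n::finite pt \<Rightarrow> 'n symb) \<Rightarrow> 'n symb" where
  "ialpha_pq F = (\<lambda>z. \<Sum>j\<in>UNIV. pc (fst z) j * F (eq j) z - qc (fst z) j * F (ep j) z)"

lemma Es_def': "Es S = (\<lambda>z. \<Sum>i\<in>UNIV. pc (fst z) i * dx S (ep i) z + qc (fst z) i * dx S (eq i) z)"
  by (rule ext) (simp add: Es_def case_prod_beta)

lemma Dop_def': "Dop S = (\<lambda>z. (\<Sum>i\<in>UNIV. qc (snd z) i * dx S (ep i) z - pc (snd z) i * dx S (eq i) z)
     + tc (snd z) * Es S z - Es_xi (fst z) (snd z) * dx S et z)"
  by (rule ext) (simp add: Dop_def case_prod_beta)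

lemma Xop_def': "Xop \<delta> k S = (\<lambda>z. Dop S z + (2 * (real CARD('n) + 1) * \<delta> + real k) * tc (snd z) * S z)"
  for S :: "'n::finite symb"
  by (rule ext) (simp add: Xop_def case_prod_beta)

lemma ialpha_def': "ialpha S = (\<lambda>z. 1/2 * (ialpha_pq (dxi S) z - dxi S et z))"
  by (rule ext) (simp add: ialpha_def ialpha_pq_def case_prod_beta)

lemma Es_xi_mult: "Es_xi (fst z) (snd z) * F z =
   (\<Sum>i\<in>UNIV. pc (fst z) i * (pc (snd z) i * F z) + qc (fst z) i * (qc (snd z) i * F z))"
  by (simp add: Es_xi_def sum_distrib_right sum_distrib_left algebra_simps)

lemma separable_Es: "separable S \<Longrightarrow> separable (Es S)"
  unfolding Es_def' by (intro separable_sum separable_add) simp_all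

lemma separable_Dop: "separable S \<Longrightarrow> separable (Dop S)"
  unfolding Dop_def' Es_xi_mult by (intro separable_add separable_diff separable_sum) (simp_all add: separable_Es)

lemma separable_Xop: "separable S \<Longrightarrow> separable (Xop \<delta> k S)"
  unfolding Xop_def' mult.assoc by (intro separable_add separable_Dop separable_scale) simp_all

lemma separable_Xpow: "separable S \<Longrightarrow> separable (Xpow \<delta> m l S)"
  by (induction l) (auto intro: separable_Xop)

lemma separable_ialpha_pq [simp]: "(\<And>e. e \<in> Basis \<Longrightarrow> separable (F e)) \<Longrightarrow> separable (ialpha_pq F)"
  unfolding ialpha_pq_def by simp

lemma separable_ialpha: "separable S \<Longrightarrow> separable (ialpha S)"
  unfolding ialpha_def' by (intro separable_scale separable_diff separable_ialpha_pq) simp_all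

lemma separable_ialpha_pow: "separable S \<Longrightarrow> separable ((ialpha ^^ a) S)"
  by (induction a) (auto intro: separable_ialpha)

lemma
  assumes "separable f"
  shows dx_scale: "dx (\<lambda>z. c * f z) e = (\<lambda>z. c * dx f e z)"
    and dxi_scale: "dxi (\<lambda>z. c * f z) e = (\<lambda>z. c * dxi f e z)"
  unfolding dx_def dxi_def using assms by (auto simp: pdir_scale)

lemma
  assumes "separable f"
  shows Dop_scale: "Dop (\<lambda>z. c * f z) = (\<lambda>z. c * Dop f z)"
    and Xop_scale: "Xop \<delta> k (\<lambda>z. c * f z) = (\<lambda>z. c * Xop \<delta> k f z)"
    and ialpha_scale: "ialpha (\<lambda>z. c * f z) = (\<lambda>z. c * ialpha f z)"
  using assms
  by (simp_all add: Xop_def' Dop_def' Es_def' ialpha_def' ialpha_pq_def dx_scale dxi_scale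
      sum_distrib_left algebra_simps)

lemma Xpow_scale: "separable f \<Longrightarrow> Xpow \<delta> m l (\<lambda>z. c * f z) = (\<lambda>z. c * Xpow \<delta> m l f z)"
  by (induction l) (auto simp: Xop_scale separable_Xpow)

lemma ialpha_pow_scale: "separable f \<Longrightarrow> (ialpha ^^ a) (\<lambda>z. c * f z) = (\<lambda>z. c * (ialpha ^^ a) f z)"
  by (induction a) (auto simp: ialpha_scale separable_ialpha_pow)

lemma
  assumes "separable f" "separable g"
  shows Dop_add: "Dop (\<lambda>z. f z + g z) = (\<lambda>z. Dop f z + Dop g z)"
    and Dop_diff: "Dop (\<lambda>z. f z - g z) = (\<lambda>z. Dop f z - Dop g z)"
  using assms
  by (auto intro!: ext simp: Dop_def' Es_def' dx_def pdir_add pdir_diff algebra_simps sum.distrib sum_subtractf)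

lemma Dop_sum: "(\<And>i. i \<in> I \<Longrightarrow> separable (F i)) \<Longrightarrow> Dop (\<lambda>z. \<Sum>i\<in>I. F i z) = (\<lambda>z. \<Sum>i\<in>I. Dop (F i) z)"
proof (induction I rule: infinite_finite_induct)
  case (insert x I)
  then have "Dop (\<lambda>z. F x z + (\<Sum>i\<in>I. F i z)) = (\<lambda>z. Dop (F x) z + Dop (\<lambda>z. \<Sum>i\<in>I. F i z) z)"
    by (intro Dop_add separable_sum) auto
  then show ?case using insert by simp
qed (use Dop_scale[OF separable_zero, of 0] in simp_all)

lemma Xpow_Xpow: "Xpow \<delta> (m + a) b (Xpow \<delta> m a S) = Xpow \<delta> m (a + b) S"
  by (induction b) (auto simp: add.assoc)

subsection \<open>Homogeneity in the fibre variable and Euler's identity\<close>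

definition homog :: "nat \<Rightarrow> 'n::finite symb \<Rightarrow> bool" where
  "homog k f \<longleftrightarrow> (\<forall>x \<xi> (c::real). f (x, c *\<^sub>R \<xi>) = c ^ k * f (x, \<xi>))"

lemma homogD: "homog k f \<Longrightarrow> f (x, c *\<^sub>R \<xi>) = c ^ k * f (x, \<xi>)"
  unfolding homog_def by blast

lemma homog_dx:
  assumes f: "separable f" and h: "homog k f"
  shows "homog k (dx f e)"
  unfolding homog_def
proof (intro allI)
  fix x \<xi> and c :: real
  have "(\<lambda>t. f ((x, c *\<^sub>R \<xi>) + t *\<^sub>R (e, 0))) = (\<lambda>t. c ^ k * f ((x, \<xi>) + t *\<^sub>R (e, 0)))"
    using homogD[OF h, of "x + _ *\<^sub>R e" c \<xi>] by simp
  moreover have "((\<lambda>t. c ^ k * f ((x, \<xi>) + t *\<^sub>R (e, 0))) has_real_derivative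
      c ^ k * frechet_derivative f (at (x, \<xi>)) (e, 0)) (at 0)"
    using f by (intro DERIV_cmult has_derivative_along_line) (simp add: frechet_derivative_works[symmetric])
  ultimately have "pdir f (e, 0) (x, c *\<^sub>R \<xi>) = c ^ k * frechet_derivative f (at (x, \<xi>)) (e, 0)"
    unfolding pdir_def by (simp add: DERIV_imp_deriv)
  then show "dx f e (x, c *\<^sub>R \<xi>) = c ^ k * dx f e (x, \<xi>)"
    using f by (simp add: dx_def pdir_frechet_derivative)
qed

lemma homog_Es: "separable f \<Longrightarrow> homog k f \<Longrightarrow> Es f (x, c *\<^sub>R \<xi>) = c ^ k * Es f (x, \<xi>)"
  by (simp add: Es_def' homogD[OF homog_dx] sum_distrib_left algebra_simps)

lemma homog_Xop:
  fixes f :: "'n::finite symb"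
  assumes f: "separable f" and h: "homog k f"
  shows "homog (Suc k) (Xop \<delta> m f)"
  unfolding homog_def
proof (intro allI)
  fix x \<xi> :: "'n pt" and c :: real
  have "Es_xi x (c *\<^sub>R \<xi>) = c * Es_xi x \<xi>"
    by (simp add: Es_xi_def sum_distrib_left algebra_simps)
  then show "Xop \<delta> m f (x, c *\<^sub>R \<xi>) = c ^ Suc k * Xop \<delta> m f (x, \<xi>)"
    unfolding Xop_def' Dop_def'
    by (simp add: homogD[OF homog_dx[OF f h]] homogD[OF h] homog_Es[OF f h] sum_distrib_left algebra_simps)
qed

lemma homog_Xpow: "separable f \<Longrightarrow> homog m f \<Longrightarrow> homog (m + l) (Xpow \<delta> m l f)"
  by (induction l) (auto intro: homog_Xop separable_Xpow)

lemma fibre_vector_expansion: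
  fixes \<xi> :: "'n::finite pt"
  shows "((0::'n pt), \<xi>) = (\<Sum>i\<in>UNIV. qc \<xi> i *\<^sub>R (0, eq i)) + (\<Sum>i\<in>UNIV. pc \<xi> i *\<^sub>R (0, ep i)) + tc \<xi> *\<^sub>R (0, et)"
proof -
  obtain a b t where \<xi>: "\<xi> = (a, b, t)" by (cases \<xi>) auto
  have expansion: "(\<Sum>i\<in>UNIV. v $ i *\<^sub>R axis i (1::real)) = v" for v :: "real^'n"
    using basis_expansion[of v] by (simp add: scalar_mult_eq_scaleR)
  have "(\<Sum>i\<in>UNIV. qc \<xi> i *\<^sub>R ((0::'n pt), eq i)) = (0, a, 0, 0)"
    and "(\<Sum>i\<in>UNIV. pc \<xi> i *\<^sub>R ((0::'n pt), ep i)) = (0, 0, b, 0)"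
    using expansion[of a] expansion[of b]
    by (simp_all add: \<xi> qc_def pc_def eq_def ep_def scaleR_prod_def sum_prod zero_prod_def)
  then show ?thesis by (simp add: \<xi> tc_def et_def zero_prod_def)
qed

lemma homog_euler:
  assumes f: "separable f" and h: "homog k f"
  shows "(\<Sum>i\<in>UNIV. qc \<xi> i * dxi f (eq i) (x, \<xi>) + pc \<xi> i * dxi f (ep i) (x, \<xi>))
          + tc \<xi> * dxi f et (x, \<xi>) = real k * f (x, \<xi>)"
proof -
  let ?z = "(x, \<xi>)" and ?f' = "frechet_derivative f (at (x, \<xi>))"
  have f': "(f has_derivative ?f') (at ?z)"
    using f by (simp add: frechet_derivative_works[symmetric])
  have "(\<lambda>t. f (?z + t *\<^sub>R (0, \<xi>))) = (\<lambda>t. (1 + t) ^ k * f ?z)"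
    using homogD[OF h, of x "1 + _" \<xi>] by (simp add: algebra_simps)
  moreover have "((\<lambda>t. (1 + t) ^ k * f ?z) has_real_derivative real k * (1 + 0) ^ (k - 1) * 1 * f ?z) (at 0)"
    by (intro DERIV_cmult_right DERIV_pow derivative_eq_intros) auto
  ultimately have "((\<lambda>t. f (?z + t *\<^sub>R (0, \<xi>))) has_real_derivative real k * f ?z) (at 0)"
    by simp
  then have "?f' (0, \<xi>) = real k * f ?z"
    by (rule DERIV_unique[OF has_derivative_along_line[OF f']])
  moreover have "?f' (0, \<xi>) = (\<Sum>i\<in>UNIV. qc \<xi> i * ?f' (0, eq i) + pc \<xi> i * ?f' (0, ep i)) + tc \<xi> * ?f' (0, et)"
    using has_derivative_linear[OF f'] by (subst fibre_vector_expansion)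
      (simp only: linear_add linear_sum linear_scale sum.distrib real_scaleR_def)
  ultimately show ?thesis
    using f by (simp add: dxi_def pdir_frechet_derivative)
qed

subsection \<open>The commutation relation between \<open>i(\<alpha>)\<close> and \<open>X\<close>\<close>

lemma separable_pdir [simp]:
  "separable f \<Longrightarrow> e \<in> Basis \<Longrightarrow> separable (pdir f (e, 0))"
  "separable f \<Longrightarrow> e \<in> Basis \<Longrightarrow> separable (pdir f (0, e))"
  using separable_dx separable_dxi unfolding dx_def dxi_def by blast+

lemma pdir_base_fibre_commute [simp]:
  "separable f \<Longrightarrow> e \<in> Basis \<Longrightarrow> w \<in> Basis \<Longrightarrow> pdir (pdir f (e, 0)) (0, w) = pdir (pdir f (0, w)) (e, 0)"
  using dx_dxi_commute[of f e w] unfolding dx_def dxi_def by simp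

lemma dxi_Xop:
  fixes T :: "'n::finite symb"
  assumes "separable T" and "w \<in> Basis"
  shows "dxi (Xop \<delta> k T) w z =
     (\<Sum>i\<in>UNIV. qc w i * dx T (ep i) z - pc w i * dx T (eq i) z) + tc w * Es T z
      - Es_xi (fst z) w * dx T et z + Dop (dxi T w) z
      + (2 * (real CARD('n) + 1) * \<delta> + real k) * (tc w * T z + tc (snd z) * dxi T w z)"
  using assms unfolding Xop_def' Dop_def' Es_def' Es_xi_def dxi_def dx_def
  by (simp add: pdir_add pdir_diff pdir_mult pdir_sum pdir_scale algebra_simps sum.distrib
      sum_subtractf sum_distrib_left)

lemma dxi_Xop_basis:
  fixes T :: "'n::finite symb" and \<delta> :: real and k :: nat
  defines "C \<equiv> 2 * (real CARD('n) + 1) * \<delta> + real k"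
  assumes "separable T"
  shows "dxi (Xop \<delta> k T) (eq j) z =
      dx T (ep j) z - qc (fst z) j * dx T et z + Dop (dxi T (eq j)) z + C * (tc (snd z) * dxi T (eq j) z)"
    and "dxi (Xop \<delta> k T) (ep j) z =
      - dx T (eq j) z - pc (fst z) j * dx T et z + Dop (dxi T (ep j)) z + C * (tc (snd z) * dxi T (ep j) z)"
    and "dxi (Xop \<delta> k T) et z = Es T z + Dop (dxi T et) z + C * (T z + tc (snd z) * dxi T et z)"
  using assms
  by (simp_all add: dxi_Xop Es_xi_def if_distrib[of "(*) _"] if_distrib[of "\<lambda>y. y * _"] sum_negf
      cong: if_cong)

lemma Dop_mult_coordinates:
  assumes "separable F"
  shows "Dop (\<lambda>z. pc (fst z) j * F z) z
           = pc (fst z) j * Dop F z + (qc (snd z) j + tc (snd z) * pc (fst z) j) * F z"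
    and "Dop (\<lambda>z. qc (fst z) j * F z) z
           = qc (fst z) j * Dop F z + (tc (snd z) * qc (fst z) j - pc (snd z) j) * F z"
  using assms
  by (simp_all add: Dop_def' Es_def' dx_def pdir_mult distrib_left sum.distrib sum_subtractf
      if_distrib[of "(*) _"] if_distrib[of "\<lambda>y. y * _"] cong: if_cong)
    (simp_all add: algebra_simps sum.distrib sum_subtractf sum_distrib_left)

lemma Dop_ialpha_pq:
  assumes "separable T"
  shows "Dop (ialpha_pq (dxi T)) z = ialpha_pq (\<lambda>e. Dop (dxi T e)) z
      + (\<Sum>j\<in>UNIV. qc (snd z) j * dxi T (eq j) z + pc (snd z) j * dxi T (ep j) z)
      + tc (snd z) * ialpha_pq (dxi T) z"
proof -
  have "Dop (ialpha_pq (dxi T)) z = (\<Sum>j\<in>UNIV. Dop (\<lambda>z. pc (fst z) j * dxi T (eq j) z) z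
                                            - Dop (\<lambda>z. qc (fst z) j * dxi T (ep j) z) z)"
    using assms unfolding ialpha_pq_def by (simp add: Dop_sum Dop_diff)
  then show ?thesis
    using assms by (simp add: Dop_mult_coordinates ialpha_pq_def algebra_simps sum.distrib
        sum_subtractf sum_distrib_left)
qed

lemma ialpha_pq_dxi_Xop:
  fixes T :: "'n::finite symb" and \<delta> :: real and k :: nat
  defines "C \<equiv> 2 * (real CARD('n) + 1) * \<delta> + real k"
  assumes "separable T"
  shows "ialpha_pq (dxi (Xop \<delta> k T)) z
           = ialpha_pq (\<lambda>e. Dop (dxi T e)) z + Es T z + C * tc (snd z) * ialpha_pq (dxi T) z"
  using assms by (simp add: ialpha_pq_def dxi_Xop_basis Es_def' algebra_simps sum.distrib
      sum_subtractf sum_distrib_left)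

lemma ialpha_Xop:
  fixes T :: "'n::finite symb"
  assumes "separable T" and "homog k T"
  shows "ialpha (Xop \<delta> k T) z = Dop (ialpha T) z
     + (2 * (real CARD('n) + 1) * \<delta> + real k - 1) * tc (snd z) * ialpha T z
     - ((real CARD('n) + 1) * \<delta> + real k) * T z"
proof -
  obtain x \<xi> where z: "z = (x, \<xi>)" by (cases z)
  have "separable (\<lambda>z. ialpha_pq (dxi T) z - dxi T et z)"
    using assms(1) by simp
  then have "Dop (ialpha T) z = 1/2 * (Dop (ialpha_pq (dxi T)) z - Dop (dxi T et) z)"
    using assms(1) unfolding ialpha_def' by (simp only: Dop_scale) (simp add: Dop_diff)
  with homog_euler[OF assms, of \<xi> x] show ?thesis
    using assms(1) unfolding z
    by (simp add: ialpha_def' ialpha_pq_dxi_Xop dxi_Xop_basis Dop_ialpha_pq field_simps)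
qed

subsection \<open>The coefficients\<close>

definition rr_falling :: "nat \<Rightarrow> real \<Rightarrow> nat \<Rightarrow> nat \<Rightarrow> nat \<Rightarrow> real" where
  "rr_falling n \<delta> m a b = (\<Prod>i<a. rr n \<delta> (b - i) m)"

lemma rr_zero [simp]: "rr n \<delta> 0 k = 0"
  by (simp add: rr_def)

lemma rr_split:
  assumes "l \<le> b + 1"
  shows "rr n \<delta> (b + 1) m = rr n \<delta> l (m + b + 1 - l) + rr n \<delta> (b + 1 - l) m"
proof -
  have "real (m + b + 1 - l) = real m + real b + 1 - real l" and "real (b + 1 - l) = real b + 1 - real l"
    using assms by linarith+
  then show ?thesis unfolding rr_def by (simp add: field_simps)
qed

lemma rr_falling_0 [simp]: "rr_falling n \<delta> m 0 b = 1"
  by (simp add: rr_falling_def)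

lemma rr_falling_Suc: "rr_falling n \<delta> m (Suc a) b = rr_falling n \<delta> m a b * rr n \<delta> (b - a) m"
  by (simp add: rr_falling_def)

lemma rr_falling_eq_0: "b < a \<Longrightarrow> rr_falling n \<delta> m a b = 0"
  unfolding rr_falling_def by (rule prod_zero) (auto intro!: bexI[of _ b])

lemma bb_0 [simp]: "bb n \<delta> j 0 = 1"
  by (simp add: bb_def)

lemma bb_Suc: "bb n \<delta> j (Suc l) = bb n \<delta> j l * inverse (- rr n \<delta> (Suc l) (j - Suc l))"
  by (simp add: bb_def inverse_mult_distrib)

lemma bb_rr_falling_telescope:
  assumes "1 \<le> l" and nz: "rr n \<delta> l (m + b + 1 - l) \<noteq> 0"
  shows "bb n \<delta> (m + b + 1) l * rr_falling n \<delta> m (l - 1) b * rr n \<delta> (b + 1) m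
       = rr_falling n \<delta> m l b * bb n \<delta> (m + b + 1) l
         - rr_falling n \<delta> m (l - 1) b * bb n \<delta> (m + b + 1) (l - 1)"
proof (cases "l \<le> b + 1")
  case True
  obtain l' where l: "l = Suc l'" using assms(1) by (cases l) auto
  have "rr n \<delta> (b + 1) m = rr n \<delta> l (m + b + 1 - l) + rr n \<delta> (b - l') m"
    using rr_split[OF True, of n \<delta> m] l by simp
  then show ?thesis
    using nz unfolding l by (simp add: bb_Suc rr_falling_Suc field_simps)
next
  case False
  then show ?thesis by (simp add: rr_falling_eq_0)
qed

lemma sum_bb_rr_falling:
  assumes nz: "\<And>l. 1 \<le> l \<Longrightarrow> l \<le> m + b + 1 \<Longrightarrow> rr n \<delta> l (m + b + 1 - l) \<noteq> 0"
  shows "- (\<Sum>l=1..m + b + 1. bb n \<delta> (m + b + 1) l * rr_falling n \<delta> m (l - 1) b)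
         = inverse (rr n \<delta> (b + 1) m)"
proof -
  define G where "G l = rr_falling n \<delta> m l b * bb n \<delta> (m + b + 1) l" for l
  have telescope: "(\<Sum>l=1..j. G l - G (l - 1)) = G j - G 0" for j
    by (induction j) simp_all
  have "(\<Sum>l=1..m + b + 1. bb n \<delta> (m + b + 1) l * rr_falling n \<delta> m (l - 1) b) * rr n \<delta> (b + 1) m
      = (\<Sum>l=1..m + b + 1. G l - G (l - 1))"
    unfolding sum_distrib_right G_def by (intro sum.cong refl bb_rr_falling_telescope nz) auto
  also have "\<dots> = G (m + b + 1) - G 0"
    by (rule telescope)
  also have "\<dots> = -1"
    by (simp add: G_def rr_falling_eq_0)
  finally show ?thesis
    using nz[of "b + 1"] by (simp add: field_simps)
qed

lemma sop_scale: "separable F \<Longrightarrow> sop \<delta> d (\<lambda>z. c * F z) = (\<lambda>z. c * sop \<delta> d F z)"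
  unfolding sop_def
  by (simp add: ialpha_pow_scale Xpow_scale separable_ialpha_pow sum_distrib_left algebra_simps)

subsection \<open>The operators on the kernel of \<open>i(\<alpha>)\<close>\<close>

context
  fixes S :: "'n::finite symb" and m :: nat and \<delta> :: real
  assumes separable_S: "separable S" and homog_S: "homog m S" and ialpha_S: "ialpha S = (\<lambda>_. 0)"
begin

lemma ialpha_Xpow: "ialpha (Xpow \<delta> m b S) = (\<lambda>z. rr CARD('n) \<delta> b m * Xpow \<delta> m (b - 1) S z)"
proof (induction b)
  case (Suc b)
  define N where "N = real CARD('n)"
  have X: "separable (Xpow \<delta> m b S)" "homog (m + b) (Xpow \<delta> m b S)"
    using separable_S homog_S by (simp_all add: separable_Xpow homog_Xpow)
  show ?case
  proof
    fix z
    have "ialpha (Xpow \<delta> m (Suc b) S) z = Dop (ialpha (Xpow \<delta> m b S)) z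
       + (2 * (N + 1) * \<delta> + real (m + b) - 1) * tc (snd z) * ialpha (Xpow \<delta> m b S) z
       - ((N + 1) * \<delta> + real (m + b)) * Xpow \<delta> m b S z"
      using ialpha_Xop[OF X] by (simp add: N_def)
    also have "\<dots> = rr CARD('n) \<delta> b m * (Dop (Xpow \<delta> m (b - 1) S) z
       + (2 * (N + 1) * \<delta> + real (m + b) - 1) * tc (snd z) * Xpow \<delta> m (b - 1) S z)
       - ((N + 1) * \<delta> + real (m + b)) * Xpow \<delta> m b S z"
      using separable_S by (simp add: Suc.IH Dop_scale separable_Xpow algebra_simps)
    also have "\<dots> = rr CARD('n) \<delta> (Suc b) m * Xpow \<delta> m b S z"
    proof (cases b)
      case 0
      then show ?thesis by (simp add: rr_def N_def field_simps)
    next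
      case (Suc b')
      have X: "Xpow \<delta> m b S z = Dop (Xpow \<delta> m b' S) z
          + (2 * (N + 1) * \<delta> + real (m + b')) * tc (snd z) * Xpow \<delta> m b' S z"
        by (simp add: Suc Xop_def' N_def)
      have r: "rr CARD('n) \<delta> (Suc b) m = rr CARD('n) \<delta> b m - ((N + 1) * \<delta> + real (m + b))"
        by (simp add: rr_def N_def Suc field_simps)
      show ?thesis unfolding r X by (simp add: Suc algebra_simps)
    qed
    finally show "ialpha (Xpow \<delta> m (Suc b) S) z = rr CARD('n) \<delta> (Suc b) m * Xpow \<delta> m (Suc b - 1) S z"
      by simp
  qed
qed (simp add: ialpha_S)

lemma ialpha_pow_Xpow:
  "(ialpha ^^ a) (Xpow \<delta> m b S) = (\<lambda>z. rr_falling CARD('n) \<delta> m a b * Xpow \<delta> m (b - a) S z)"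
proof (induction a)
  case (Suc a)
  then show ?case
    using separable_S
    by (simp add: ialpha_scale separable_Xpow ialpha_Xpow rr_falling_Suc mult.assoc)
qed simp

lemma Xpow_ialpha_pow_Xpow:
  assumes "1 \<le> l"
  shows "Xpow \<delta> (m + b + 1 - l) l ((ialpha ^^ (l - 1)) (Xpow \<delta> m b S)) z
       = rr_falling CARD('n) \<delta> m (l - 1) b * Xpow \<delta> m (b + 1) S z"
proof -
  have "Xpow \<delta> (m + b + 1 - l) l ((ialpha ^^ (l - 1)) (Xpow \<delta> m b S)) z
      = rr_falling CARD('n) \<delta> m (l - 1) b * Xpow \<delta> (m + b + 1 - l) l (Xpow \<delta> m (b - (l - 1)) S) z"
    using separable_S by (simp only: ialpha_pow_Xpow Xpow_scale separable_Xpow)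
  also have "\<dots> = rr_falling CARD('n) \<delta> m (l - 1) b * Xpow \<delta> m (b + 1) S z"
  proof (cases "l - 1 \<le> b")
    case True
    then have m: "m + b + 1 - l = m + (b - (l - 1))" and b: "b - (l - 1) + l = b + 1"
      using assms by auto
    show ?thesis by (simp only: m Xpow_Xpow b)
  qed (simp add: rr_falling_eq_0)
  finally show ?thesis .
qed

lemma sop_Xpow:
  assumes "\<And>l. 1 \<le> l \<Longrightarrow> l \<le> m + b + 1 \<Longrightarrow> rr CARD('n) \<delta> l (m + b + 1 - l) \<noteq> 0"
  shows "sop \<delta> (m + b) (Xpow \<delta> m b S)
       = (\<lambda>z. inverse (rr CARD('n) \<delta> (b + 1) m) * Xpow \<delta> m (b + 1) S z)"
proof
  fix z
  have "(\<Sum>l=1..m + b + 1. bb CARD('n) \<delta> (m + b + 1) l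
          * Xpow \<delta> (m + b + 1 - l) l ((ialpha ^^ (l - 1)) (Xpow \<delta> m b S)) z)
      = (\<Sum>l=1..m + b + 1. bb CARD('n) \<delta> (m + b + 1) l * rr_falling CARD('n) \<delta> m (l - 1) b)
        * Xpow \<delta> m (b + 1) S z"
    unfolding sum_distrib_right
    by (intro sum.cong refl) (simp only: Xpow_ialpha_pow_Xpow mult.assoc atLeastAtMost_iff)
  then show "sop \<delta> (m + b) (Xpow \<delta> m b S) z = inverse (rr CARD('n) \<delta> (b + 1) m) * Xpow \<delta> m (b + 1) S z"
    using sum_bb_rr_falling[OF assms] by (simp only: sop_def minus_mult_left)
qed

lemma spow_Xpow:
  "(\<And>j l. j \<le> m + b \<Longrightarrow> 1 \<le> l \<Longrightarrow> l \<le> j \<Longrightarrow> rr CARD('n) \<delta> l (j - l) \<noteq> 0) \<Longrightarrow>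
   spow \<delta> m b S = (\<lambda>z. inverse (\<Prod>i=1..b. rr CARD('n) \<delta> i m) * Xpow \<delta> m b S z)"
proof (induction b)
  case (Suc b)
  have "spow \<delta> m (Suc b) S = sop \<delta> (m + b) (\<lambda>z. inverse (\<Prod>i=1..b. rr CARD('n) \<delta> i m) * Xpow \<delta> m b S z)"
    using Suc by simp
  also have "\<dots> = (\<lambda>z. inverse (\<Prod>i=1..b. rr CARD('n) \<delta> i m) * sop \<delta> (m + b) (Xpow \<delta> m b S) z)"
    using separable_S by (simp add: sop_scale separable_Xpow)
  also have "\<dots> = (\<lambda>z. inverse (\<Prod>i=1..b. rr CARD('n) \<delta> i m) * inverse (rr CARD('n) \<delta> (b + 1) m)
                      * Xpow \<delta> m (b + 1) S z)"
    using Suc.prems by (subst sop_Xpow) (auto simp: mult.assoc)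
  finally show ?case by (simp add: inverse_mult_distrib mult.commute)
qed simp

end

lemma monom_xi_scaleR:
  fixes \<xi> :: "'a::euclidean_space"
  assumes "\<alpha> \<in> multi_idx k"
  shows "monom_xi \<alpha> (c *\<^sub>R \<xi>) = c ^ k * monom_xi \<alpha> \<xi>"
proof -
  have "monom_xi \<alpha> (c *\<^sub>R \<xi>) = (\<Prod>b\<in>(Basis::'a set). c ^ \<alpha> b) * monom_xi \<alpha> \<xi>"
    by (simp add: monom_xi_def power_mult_distrib prod.distrib)
  also have "(\<Prod>b\<in>(Basis::'a set). c ^ \<alpha> b) = c ^ k"
    using assms by (simp add: multi_idx_def power_sum[symmetric])
  finally show ?thesis .
qed

lemma SkE:
  assumes "S \<in> Sk k"
  obtains a where "\<forall>\<alpha>\<in>multi_idx k. smooth (a \<alpha>)"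
    and "S = (\<lambda>z. \<Sum>\<alpha>\<in>multi_idx k. a \<alpha> (fst z) * monom_xi \<alpha> (snd z))"
  using assms unfolding Sk_def by force

lemma Sk_separable: "S \<in> Sk k \<Longrightarrow> separable S"
  by (erule SkE) (simp add: separable_product smooth_imp_C_inf C_inf_monom_xi)

lemma Sk_homog: "S \<in> Sk k \<Longrightarrow> homog k S"
  by (erule SkE) (simp add: homog_def monom_xi_scaleR sum_distrib_left ac_simps cong: sum.cong)

lemma rr_nonzero:
  assumes "\<delta> \<notin> (\<Union>j\<in>{1..k}. Iset n j)" and "j \<le> k" and "1 \<le> l" "l \<le> j"
  shows "rr n \<delta> l (j - l) \<noteq> 0"
proof
  assume "rr n \<delta> l (j - l) = 0"
  then have "2 * (real n + 1) * \<delta> + 2 * real (j - l) + real l - 1 = 0"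
    using assms by (simp add: rr_def)
  moreover have "real (j - l) = real j - real l" and "real (2 * j - l - 1) = 2 * real j - real l - 1"
    using assms by linarith+
  ultimately have "\<delta> = - real (2 * j - l - 1) / (2 * (real n + 1))"
    by (simp add: field_simps)
  moreover have "2 * j - l - 1 \<in> {j - 1 .. 2 * j - 2}"
    using assms by auto
  ultimately have "\<delta> \<in> Iset n j"
    unfolding Iset_def by blast
  then show False
    using assms by auto
qed

theorem proposition5p3:
  fixes \<delta> :: real and k l :: nat and S :: "'n::finite symb"
  assumes "k \<ge> 1" and "1 \<le> l" and "l \<le> k"
    and "\<delta> \<notin> (\<Union>j\<in>{1..k}. Iset CARD('n) j)"
    and "S \<in> Rsp \<delta> (k - l)" and "ialpha S = (\<lambda>_. 0)"
  shows "spow \<delta> (k - l) l S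
         = (\<lambda>z. inverse (\<Prod>i=1..l. rr CARD('n) \<delta> i (k - l)) * Xpow \<delta> (k - l) l S z)"
proof (rule spow_Xpow)
  show "separable S" and "homog (k - l) S"
    using assms(5) by (simp_all add: Rsp_def Sk_separable Sk_homog)
  show "ialpha S = (\<lambda>_. 0)"
    by (fact assms(6))
  show "rr CARD('n) \<delta> l' (j - l') \<noteq> 0" if "j \<le> k - l + l" "1 \<le> l'" "l' \<le> j" for j l'
    using rr_nonzero[OF assms(4)] that assms(3) by simp
qed

end
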